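(* Let $r\ge 2$ and let $\mathcal{D}$ be the infinite lattice path defined in the context, with vertices $w_0=(0,0),w_1,w_2,\dots$ in order along the path, and for each $j\ge 0$ let $v_j$ be the leftmost vertex of $\mathcal{D}$ at height $j$ (the $j$-th northwest corner). Define $\mu$ on the vertices of $\mathcal{D}$ by $\mu(w_i)=v_i$. If $w_i$ has coordinates $(x,y)$, then $$\mu(w_i)=\big((r-1)x+(r-2)y,\;x+y\big).$$
   Context: Fix an integer $r\ge 2$. Define $c_1=0$, $c_2=1$, $c_n=rc_{n-1}-c_{n-2}$ for $n\ge 3$. For nonnegative integers $a,b$, the maximal Dyck path $\mathcal{P}(a,b)$ is the lattice path from $(0,0)$ to $(a,b)$ using unit north and east steps that never passes strictly above the line segment from $(0,0)$ to $(a,b)$ and is closest to that segment (i.e. it is the maximal such path in the partial order comparing heights at all vertices). For $n\ge 3$ let $\mathcal{D}_n=\mathcal{P}(c_{n-1}-c_{n-2},c_{n-2})$. Each $\mathcal{D}_{n}$ is a prefix of $\mathcal{D}_{n+1}$, and $\mathcal{D}$ denotes the infinite path $\bigcup_{n\ge 3}\mathcal{D}_n$; each $\mathcal{D}_n$ is identified with the prefix of $\mathcal{D}$ of the same length. The $i$-th vertex $w_i$ of $\mathcal{D}$ is the endpoint of its first $i$ steps. *)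

theory Defs
  imports Main
begin

text \<open>The sequence c_n (depending on the parameter r): c_1 = 0, c_2 = 1,
  c_n = r c_{n-1} - c_{n-2}.  The value at index 0 is irrelevant (set to 0).\<close>
fun cseq :: "int \<Rightarrow> nat \<Rightarrow> int" where
  "cseq r 0 = 0"
| "cseq r (Suc 0) = 0"
| "cseq r (Suc (Suc 0)) = 1"
| "cseq r (Suc (Suc (Suc n))) = r * cseq r (Suc (Suc n)) - cseq r (Suc n)"

text \<open>A lattice path is a list of unit steps: True = north step, False = east step.
  The k-th vertex is the endpoint of the first k steps.\<close>
definition vtx :: "bool list \<Rightarrow> nat \<Rightarrow> int \<times> int" where
  "vtx s k = (int (length (filter Not (take k s))), int (length (filter id (take k s))))"

definition below_path :: "nat \<Rightarrow> nat \<Rightarrow> bool list \<Rightarrow> bool" where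
  "below_path a b s \<longleftrightarrow> length s = a + b \<and> vtx s (a + b) = (int a, int b) \<and>
     (\<forall>k \<le> a + b. int a * snd (vtx s k) \<le> int b * fst (vtx s k))"

definition maxDyck :: "nat \<Rightarrow> nat \<Rightarrow> bool list" where
  "maxDyck a b = (THE s. below_path a b s \<and>
     (\<forall>t. below_path a b t \<longrightarrow> (\<forall>k \<le> a + b. snd (vtx t k) \<le> snd (vtx s k))))"

definition Dn :: "int \<Rightarrow> nat \<Rightarrow> bool list" where
  "Dn r n = maxDyck (nat (cseq r (n - 1) - cseq r (n - 2))) (nat (cseq r (n - 2)))"

text \<open>The i-th vertex w_i of the infinite path D = union of the D_n (each D_n a prefix
  of D_{n+1}): computed in the first D_n long enough to contain i steps.\<close>
definition wD :: "int \<Rightarrow> nat \<Rightarrow> int \<times> int" where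
  "wD r i = vtx (Dn r (LEAST n. 3 \<le> n \<and> i \<le> length (Dn r n))) i"

definition vD :: "int \<Rightarrow> nat \<Rightarrow> int \<times> int" where
  "vD r j = ((LEAST x. \<exists>k. wD r k = (x, int j)), int j)"

definition muD :: "int \<Rightarrow> nat \<Rightarrow> int \<times> int" where
  "muD r i = vD r i"

end

theory Submission
  imports Defs
begin

text \<open>The maximal Dyck path P(a,b) is the floor path with height floor(b k / (a + b)) at its
  k-th vertex, so D_{m+3} has height floor(c_{m+1} k / c_{m+2}) there.  Cassini's identity
  c_{m+2}^2 - c_{m+3} c_{m+1} = 1 shows that this value does not change when m grows, which gives
  the height h(k) of w_k.  Computing h(k) one level higher, h(k) \<ge> i means c_{m+3} i \<le> c_{m+2} k,
  and since c_{m+3} = r c_{m+2} - c_{m+1} this is equivalent to k \<ge> r i - h(i).  Hence the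
  leftmost vertex at height i is w_k with k = r i - h(i), of abscissa r i - h(i) - i, which is
  (r-1)x + (r-2)y for w_i = (x, y) = (i - h(i), h(i)).\<close>

lemma int_le_div_iff_mult_le:
  fixes a b q :: int
  assumes "0 < b"
  shows "q \<le> a div b \<longleftrightarrow> b * q \<le> a"
proof
  assume "q \<le> a div b"
  then have "b * q \<le> b * (a div b)" using assms by simp
  also have "\<dots> \<le> a" using assms pos_mod_sign[of b a] minus_mult_div_eq_mod[of a b] by linarith
  finally show "b * q \<le> a" .
next
  assume "b * q \<le> a"
  then have "b * q div b \<le> a div b" using assms by (rule zdiv_mono1)
  then show "q \<le> a div b" using assms by simp
qed

lemma int_le_div_sub_iff:
  fixes A B r i k :: int
  assumes "0 < B" and "0 < r * B - A"
  shows "i \<le> B * k div (r * B - A) \<longleftrightarrow> r * i - A * i div B \<le> k"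
proof -
  have "i \<le> B * k div (r * B - A) \<longleftrightarrow> (r * B - A) * i \<le> B * k"
    using assms(2) by (rule int_le_div_iff_mult_le)
  also have "\<dots> \<longleftrightarrow> B * (r * i - k) \<le> A * i"
    by (simp add: algebra_simps)
  also have "\<dots> \<longleftrightarrow> r * i - k \<le> A * i div B"
    using assms(1) by (simp add: int_le_div_iff_mult_le)
  finally show ?thesis by linarith
qed

lemma int_div_eq_div_if_cassini:
  fixes A B C k :: int
  assumes "0 \<le> A" "0 < B" "B < C" "0 \<le> k" "k \<le> B" and cassini: "B * B = C * A + 1"
  shows "B * k div C = A * k div B"
proof -
  have cassini_mult: "B * (B * x) = A * (C * x) + x" for x
    using arg_cong[OF cassini, of "\<lambda>y. y * x"] by (simp add: algebra_simps)
  have "j \<le> B * k div C \<longleftrightarrow> j \<le> A * k div B" for j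
  proof -
    have "C * j \<le> B * k \<longleftrightarrow> B * j \<le> A * k"
    proof
      assume Cj: "C * j \<le> B * k"
      also have "\<dots> \<le> B * B" using \<open>0 < B\<close> \<open>k \<le> B\<close> by simp
      also have "\<dots> < C * B" using \<open>0 < B\<close> \<open>B < C\<close> by simp
      finally have "j < B" using assms by simp
      have "B * (B * j) = A * (C * j) + j" by (fact cassini_mult)
      also have "\<dots> \<le> A * (B * k) + j" using Cj assms by (simp add: mult_left_mono)
      finally have "B * (B * j - A * k) \<le> j" by (simp add: algebra_simps)
      moreover have "B \<le> B * (B * j - A * k)" if "1 \<le> B * j - A * k"
        using that assms by (simp add: mult_le_cancel_left1)
      ultimately show "B * j \<le> A * k" using \<open>j < B\<close> by linarith
    next
      assume Bj: "B * j \<le> A * k"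
      have "B * (C * j) = C * (B * j)" by simp
      also have "\<dots> \<le> C * (A * k)" using Bj assms by simp
      also have "\<dots> = B * (B * k) - k" using cassini_mult[of k] by (simp add: algebra_simps)
      also have "\<dots> \<le> B * (B * k)" using assms by simp
      finally show "C * j \<le> B * k" using assms by simp
    qed
    then show ?thesis using assms by (simp add: int_le_div_iff_mult_le)
  qed
  then show ?thesis by (meson order_antisym order_refl)
qed

lemma cseq_nonneg_less:
  assumes "r \<ge> 2"
  shows "0 \<le> cseq r (Suc n) \<and> cseq r (Suc n) < cseq r (Suc (Suc n))"
proof (induction n)
  case 0
  then show ?case by simp
next
  case (Suc n)
  let ?a = "cseq r (Suc n)" and ?b = "cseq r (Suc (Suc n))"
  have "?b \<le> (r - 1) * ?b" using Suc assms by (simp add: mult_le_cancel_right1)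
  moreover have "(r - 1) * ?b = r * ?b - ?b" by (simp add: algebra_simps)
  ultimately have "?b < r * ?b - ?a" using Suc by linarith
  then show ?case using Suc by simp
qed

lemma cseq_mono:
  assumes "r \<ge> 2" "m \<le> n"
  shows "cseq r (Suc m) \<le> cseq r (Suc n)"
  using lift_Suc_mono_le[of "\<lambda>k. cseq r (Suc k)"] cseq_nonneg_less[OF assms(1)] assms(2)
  by (meson less_imp_le)

lemma cseq_ge_index:
  assumes "r \<ge> 2"
  shows "int n \<le> cseq r (Suc (Suc n))"
proof (induction n)
  case 0
  then show ?case by simp
next
  case (Suc n)
  then show ?case using cseq_nonneg_less[OF assms, of "Suc n"] by simp
qed

lemma cseq_cassini:
  "cseq r (Suc (Suc n)) * cseq r (Suc (Suc n)) = cseq r (Suc (Suc (Suc n))) * cseq r (Suc n) + 1"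
  by (induction n) (simp_all add: algebra_simps)

definition path_height :: "bool list \<Rightarrow> nat \<Rightarrow> nat" where
  "path_height s k = length (filter id (take k s))"

lemma path_height_Suc:
  assumes "k < length s"
  shows "path_height s (Suc k) = path_height s k + (if s ! k then 1 else 0)"
  using assms by (simp add: path_height_def take_Suc_conv_app_nth)

lemma vtx_eq_path_height:
  assumes "k \<le> length s"
  shows "vtx s k = (int k - int (path_height s k), int (path_height s k))"
proof -
  have "length (filter Not (take k s)) + length (filter id (take k s)) = k"
    using sum_length_filter_compl[of id "take k s"] assms by (simp add: comp_def)
  then show ?thesis unfolding vtx_def path_height_def by simp
qed

lemma path_eqI_path_height:
  assumes "length s = length t" "\<And>k. k \<le> length s \<Longrightarrow> path_height s k = path_height t k"
  shows "s = t"
proof (rule nth_equalityI)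
  show "length s = length t" by fact
  fix k assume k: "k < length s"
  have "path_height s (Suc k) = path_height t (Suc k)" "path_height s k = path_height t k"
    using assms(2) k by auto
  then show "s ! k = t ! k"
    using path_height_Suc[OF k] path_height_Suc[of k t] k assms(1) by (auto split: if_splits)
qed

lemma path_height_map_steps:
  assumes g0: "g 0 = 0" and unit_steps: "\<And>k. g k \<le> g (Suc k) \<and> g (Suc k) \<le> g k + 1"
    and "k \<le> n"
  shows "path_height (map (\<lambda>k. g k < g (Suc k)) [0..<n]) k = g k"
  using assms(3)
proof (induction k)
  case 0
  then show ?case by (simp add: path_height_def g0)
next
  case (Suc k)
  then have "path_height (map (\<lambda>k. g k < g (Suc k)) [0..<n]) (Suc k) =
      g k + (if g k < g (Suc k) then 1 else 0)"
    by (subst path_height_Suc) auto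
  also have "\<dots> = g (Suc k)" using unit_steps[of k] by auto
  finally show ?case .
qed

definition floor_path :: "nat \<Rightarrow> nat \<Rightarrow> bool list" where
  "floor_path a b = map (\<lambda>k. b * k div (a + b) < b * Suc k div (a + b)) [0..<a + b]"

lemma length_floor_path [simp]: "length (floor_path a b) = a + b"
  by (simp add: floor_path_def)

lemma path_height_floor_path:
  assumes "k \<le> a + b"
  shows "path_height (floor_path a b) k = b * k div (a + b)"
  unfolding floor_path_def
proof (rule path_height_map_steps[OF _ _ assms])
  fix k
  have "b * k div (a + b) \<le> b * Suc k div (a + b)" by (intro div_le_mono) simp
  moreover have "b * Suc k div (a + b) \<le> (b * k + (a + b)) div (a + b)"
    by (intro div_le_mono) simp
  moreover have "(b * k + (a + b)) div (a + b) \<le> b * k div (a + b) + 1"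
    by (cases "a + b = 0") (simp_all add: div_add_self2)
  ultimately show "b * k div (a + b) \<le> b * Suc k div (a + b) \<and>
      b * Suc k div (a + b) \<le> b * k div (a + b) + 1" by linarith
qed simp

lemma below_path_iff_path_height_le:
  assumes "length t = a + b" "a + b > 0"
  shows "below_path a b t \<longleftrightarrow>
    path_height t (a + b) = b \<and> (\<forall>k \<le> a + b. path_height t k \<le> b * k div (a + b))"
proof -
  have "int a * snd (vtx t k) \<le> int b * fst (vtx t k) \<longleftrightarrow> path_height t k \<le> b * k div (a + b)"
    if "k \<le> a + b" for k
  proof -
    have "int a * snd (vtx t k) \<le> int b * fst (vtx t k) \<longleftrightarrow>
        int (path_height t k) * (int a + int b) \<le> int b * int k"
      using vtx_eq_path_height[of k t] that assms(1) by (simp add: algebra_simps)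
    also have "\<dots> \<longleftrightarrow> path_height t k * (a + b) \<le> b * k"
      by (simp only: of_nat_add[symmetric] of_nat_mult[symmetric] of_nat_le_iff)
    also have "\<dots> \<longleftrightarrow> path_height t k \<le> b * k div (a + b)"
      using assms(2) by (simp add: less_eq_div_iff_mult_less_eq)
    finally show ?thesis .
  qed
  moreover have "vtx t (a + b) = (int a, int b) \<longleftrightarrow> path_height t (a + b) = b"
    using vtx_eq_path_height[of "a + b" t] assms(1) by auto
  ultimately show ?thesis using assms(1) unfolding below_path_def by auto
qed

lemma maxDyck_eq_floor_path:
  assumes "a + b > 0"
  shows "maxDyck a b = floor_path a b"
  unfolding maxDyck_def
proof (rule the1_equality)
  let ?max = "\<lambda>s. below_path a b s \<and>
     (\<forall>t. below_path a b t \<longrightarrow> (\<forall>k \<le> a + b. snd (vtx t k) \<le> snd (vtx s k)))"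
  have height_le: "path_height t k \<le> path_height (floor_path a b) k"
    if "below_path a b t" "k \<le> a + b" for t k
    using that below_path_iff_path_height_le[of t a b] assms path_height_floor_path[of k a b]
    by (auto simp: below_path_def)
  have below_floor: "below_path a b (floor_path a b)"
    using below_path_iff_path_height_le[of "floor_path a b" a b] assms
    by (simp add: path_height_floor_path)
  show max_floor: "?max (floor_path a b)"
    using below_floor height_le vtx_eq_path_height by (auto simp: below_path_def)
  show "\<exists>!s. ?max s"
  proof (intro ex1I[of _ "floor_path a b"] max_floor path_eqI_path_height)
    fix s assume s: "?max s"
    then have len: "length s = a + b" by (simp add: below_path_def)
    then show "length s = length (floor_path a b)" by simp
    fix k assume "k \<le> length s"
    then have "path_height (floor_path a b) k \<le> path_height s k"
      using s below_floor vtx_eq_path_height[of k s] vtx_eq_path_height[of k "floor_path a b"] len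
      by fastforce
    then show "path_height s k = path_height (floor_path a b) k"
      using height_le s \<open>k \<le> length s\<close> len by (simp add: le_antisym)
  qed
qed

definition Dn_height :: "int \<Rightarrow> nat \<Rightarrow> nat \<Rightarrow> int" where
  "Dn_height r m k = cseq r (Suc m) * int k div cseq r (Suc (Suc m))"

lemma Dn_eq_floor_path:
  assumes "r \<ge> 2"
  shows "Dn r (Suc (Suc (Suc m))) =
    floor_path (nat (cseq r (Suc (Suc m)) - cseq r (Suc m))) (nat (cseq r (Suc m)))"
  using maxDyck_eq_floor_path cseq_nonneg_less[OF assms, of m] by (simp add: Dn_def)

lemma length_Dn:
  assumes "r \<ge> 2"
  shows "int (length (Dn r (Suc (Suc (Suc m))))) = cseq r (Suc (Suc m))"
  using Dn_eq_floor_path[OF assms, of m] cseq_nonneg_less[OF assms, of m] by simp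

lemma vtx_Dn:
  assumes "r \<ge> 2" and "int k \<le> cseq r (Suc (Suc m))"
  shows "vtx (Dn r (Suc (Suc (Suc m)))) k = (int k - Dn_height r m k, Dn_height r m k)"
proof -
  let ?a = "nat (cseq r (Suc (Suc m)) - cseq r (Suc m))" and ?b = "nat (cseq r (Suc m))"
  have ab: "int (?a + ?b) = cseq r (Suc (Suc m))" "int ?b = cseq r (Suc m)"
    using cseq_nonneg_less[OF assms(1), of m] by auto
  then have k: "k \<le> ?a + ?b" using assms(2) by linarith
  have "int (path_height (floor_path ?a ?b) k) = Dn_height r m k"
    using path_height_floor_path[OF k] ab unfolding Dn_height_def by (simp add: zdiv_int)
  then show ?thesis
    using vtx_eq_path_height[of k "floor_path ?a ?b"] k Dn_eq_floor_path[OF assms(1)] by simp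
qed

lemma Dn_height_Suc:
  assumes "r \<ge> 2" and "int k \<le> cseq r (Suc (Suc m))"
  shows "Dn_height r (Suc m) k = Dn_height r m k"
  unfolding Dn_height_def
  using int_div_eq_div_if_cassini[OF _ _ _ _ assms(2) cseq_cassini]
    cseq_nonneg_less[OF assms(1), of m] cseq_nonneg_less[OF assms(1), of "Suc m"]
  by simp

lemma Dn_height_stable:
  assumes "r \<ge> 2" and "m \<le> n" and "int k \<le> cseq r (Suc (Suc m))"
  shows "Dn_height r n k = Dn_height r m k"
  using assms(2)
proof (induction n rule: dec_induct)
  case (step n)
  have "int k \<le> cseq r (Suc (Suc n))"
    using cseq_mono[OF assms(1), of "Suc m" "Suc n"] step assms(3) by simp
  then show ?case using Dn_height_Suc[OF assms(1)] step by simp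
qed simp

lemma wD_eq_Dn_height:
  assumes r: "r \<ge> 2" and k: "int k \<le> cseq r (Suc (Suc m))"
  shows "wD r k = (int k - Dn_height r m k, Dn_height r m k)"
proof -
  let ?long = "\<lambda>n. 3 \<le> n \<and> k \<le> length (Dn r n)"
  have long_m: "?long (Suc (Suc (Suc m)))" using length_Dn[OF r, of m] k by simp
  define n where "n = (LEAST n. ?long n)"
  have long_n: "?long n" unfolding n_def using long_m by (rule LeastI)
  have "n \<le> Suc (Suc (Suc m))" unfolding n_def using long_m by (rule Least_le)
  define m' where "m' = n - 3"
  have n: "n = Suc (Suc (Suc m'))" and "m' \<le> m" and k': "k \<le> length (Dn r n)"
    using long_n \<open>n \<le> Suc (Suc (Suc m))\<close> unfolding m'_def by auto
  have "int k \<le> cseq r (Suc (Suc m'))" using k' length_Dn[OF r, of m'] n by simp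
  moreover have "wD r k = vtx (Dn r n) k" unfolding wD_def n_def by simp
  ultimately show ?thesis
    using vtx_Dn[OF r] Dn_height_stable[OF r \<open>m' \<le> m\<close>] n by simp
qed

lemma fst_wD:
  assumes "r \<ge> 2"
  shows "fst (wD r k) = int k - snd (wD r k)"
  using wD_eq_Dn_height[OF assms cseq_ge_index[OF assms]] by simp

lemma snd_wD_le:
  assumes "r \<ge> 2"
  shows "snd (wD r k) \<le> int k"
proof -
  have "0 \<le> fst (wD r k)" by (simp add: wD_def vtx_def)
  then show ?thesis using fst_wD[OF assms] by simp
qed

lemma snd_wD_Suc_le:
  assumes r: "r \<ge> 2"
  shows "snd (wD r (Suc k)) \<le> snd (wD r k) + 1"
proof -
  let ?A = "cseq r (Suc (Suc k))" and ?B = "cseq r (Suc (Suc (Suc k)))"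
  have k: "int k \<le> ?B" "int (Suc k) \<le> ?B"
    using cseq_ge_index[OF r, of "Suc k"] by auto
  have AB: "0 \<le> ?A" "?A < ?B" using cseq_nonneg_less[OF r, of "Suc k"] by auto
  have "?A * int (Suc k) div ?B \<le> (?A * int k + ?B) div ?B"
    using AB by (intro zdiv_mono1) (simp_all add: algebra_simps)
  also have "\<dots> = ?A * int k div ?B + 1" using AB by (intro div_add_self2) linarith
  finally show ?thesis
    using wD_eq_Dn_height[OF r k(1)] wD_eq_Dn_height[OF r k(2)] by (simp add: Dn_height_def)
qed

lemma snd_wD_ge_iff:
  assumes r: "r \<ge> 2"
  shows "int i \<le> snd (wD r k) \<longleftrightarrow> r * int i - snd (wD r i) \<le> int k"
proof -
  define m where "m = i + k"
  let ?A = "cseq r (Suc m)" and ?B = "cseq r (Suc (Suc m))"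
  have i: "int i \<le> ?B" and k: "int k \<le> cseq r (Suc (Suc (Suc m)))"
    using cseq_ge_index[OF r, of m] cseq_ge_index[OF r, of "Suc m"] m_def by auto
  have "snd (wD r i) = ?A * int i div ?B"
    using wD_eq_Dn_height[OF r i] by (simp add: Dn_height_def)
  moreover have "snd (wD r k) = ?B * int k div (r * ?B - ?A)"
    using wD_eq_Dn_height[OF r k] by (simp add: Dn_height_def)
  moreover have "0 < ?B" "0 < r * ?B - ?A"
    using cseq_nonneg_less[OF r, of m] cseq_nonneg_less[OF r, of "Suc m"] by auto
  ultimately show ?thesis using int_le_div_sub_iff by simp
qed

lemma vD_eq:
  assumes r: "r \<ge> 2"
  shows "vD r i = (r * int i - snd (wD r i) - int i, int i)"
proof -
  define K where "K = r * int i - snd (wD r i)"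
  have "int i \<le> r * int i" using r by (simp add: mult_le_cancel_right1)
  then have K_nonneg: "0 \<le> K" using snd_wD_le[OF r, of i] unfolding K_def by linarith
  have "int i \<le> snd (wD r (nat K))"
    using snd_wD_ge_iff[OF r] K_nonneg unfolding K_def by simp
  moreover have "\<not> int (Suc i) \<le> snd (wD r (nat K))"
  proof -
    have "K < r * int (Suc i) - snd (wD r (Suc i))"
      using snd_wD_Suc_le[OF r, of i] r unfolding K_def by (simp add: distrib_left)
    then show ?thesis using snd_wD_ge_iff[OF r, of "Suc i" "nat K"] K_nonneg by simp
  qed
  ultimately have "wD r (nat K) = (K - int i, int i)"
    using fst_wD[OF r, of "nat K"] K_nonneg by (simp add: prod_eq_iff)
  moreover have "K - int i \<le> X" if "wD r k = (X, int i)" for k X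
    using that snd_wD_ge_iff[OF r, of i k] fst_wD[OF r, of k] unfolding K_def by simp
  ultimately have "(LEAST X. \<exists>k. wD r k = (X, int i)) = K - int i"
    by (intro Least_equality) auto
  then show ?thesis unfolding vD_def K_def by simp
qed

theorem mainTheorem1:
  fixes r :: int and i :: nat and x y :: int
  assumes "r \<ge> 2"
    and "wD r i = (x, y)"
  shows "muD r i = ((r - 1) * x + (r - 2) * y, x + y)"
proof -
  have "muD r i = (r * int i - y - int i, int i)"
    using vD_eq[OF assms(1), of i] assms(2) unfolding muD_def by simp
  also have "int i = x + y" using fst_wD[OF assms(1), of i] assms(2) by simp
  finally show ?thesis by (simp add: algebra_simps)
qed

end
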